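(* Let $b,c_1,c_2$ be positive integers and let $\alpha/\beta$ be the right lobster $\mathcal{L}^{c_1,c_2}_b$, with $c_1$, $b$, $c_2$ cells in the top, middle and bottom rows respectively. Then $$\mathrm{inv}(S^{\mathrm{col}}_{\alpha/\beta})=c_1\bigl(b+\min\{c_1,c_2\}\bigr)+\binom{b}{2}+\binom{\max\{c_1,c_2\}}{2}.$$
   Context: Rows are numbered from the bottom. The right lobster $\mathcal{L}^{c_1,c_2}_b$ is the skew diagram $\alpha/\beta$ with $\alpha=(b+1+c_2,b+1,b+1+c_1)$, $\beta=(b+1,1,b+1)$: a bottom row of $c_2$ cells in columns $b+2,\ldots,b+1+c_2$, a middle row of $b$ cells in columns $2,\ldots,b+1$, and a top row of $c_1$ cells in columns $b+2,\ldots,b+1+c_1$. $S^{\mathrm{col}}_{\alpha/\beta}$ is the filling of $\alpha/\beta$ with $1,\ldots,b+c_1+c_2$ consecutively along columns bottom to top, from the leftmost column rightward. For a tableau $T$, $\mathrm{inv}(T)$ is the number of inversions (pairs of positions $p<q$ with the $p$th letter larger than the $q$th) of its reading word, obtained by reading each row right to left, starting from the top row and moving down. *)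

theory Defs
  imports Main
begin

text \<open>Skew diagrams alpha/beta given by lists of row lengths, rows numbered from the
bottom: entry i of the list (0-based) is row i+1 counted from the bottom.
A cell is a pair (row, column); columns are 1-based.\<close>

definition skew_cells :: "nat list \<Rightarrow> nat list \<Rightarrow> (nat \<times> nat) set" where
  "skew_cells \<alpha> \<beta> = {(i, j). i < length \<alpha> \<and> \<beta> ! i < j \<and> j \<le> \<alpha> ! i}"

text \<open>Column filling: cells numbered 1,2,... consecutively along columns from bottom to top,
leftmost column first.\<close>

definition S_col :: "nat list \<Rightarrow> nat list \<Rightarrow> nat \<times> nat \<Rightarrow> nat" where
  "S_col \<alpha> \<beta> c = card {(i', j') \<in> skew_cells \<alpha> \<beta>.
       j' < snd c \<or> (j' = snd c \<and> i' < fst c)} + 1"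

definition reading_word :: "nat list \<Rightarrow> nat list \<Rightarrow> (nat \<times> nat \<Rightarrow> nat) \<Rightarrow> nat list" where
  "reading_word \<alpha> \<beta> T =
     concat (map (\<lambda>i. map (\<lambda>j. T (i, j)) (rev [\<beta> ! i + 1 ..< \<alpha> ! i + 1]))
                 (rev [0 ..< length \<alpha>]))"

definition inversions :: "nat list \<Rightarrow> nat" where
  "inversions w = card {(p, q). p < q \<and> q < length w \<and> w ! p > w ! q}"

definition tab_inv :: "nat list \<Rightarrow> nat list \<Rightarrow> (nat \<times> nat \<Rightarrow> nat) \<Rightarrow> nat" where
  "tab_inv \<alpha> \<beta> T = inversions (reading_word \<alpha> \<beta> T)"

definition lobster_alpha :: "nat \<Rightarrow> nat \<Rightarrow> nat \<Rightarrow> nat list" where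
  "lobster_alpha c1 c2 b = [b + 1 + c2, b + 1, b + 1 + c1]"

definition lobster_beta :: "nat \<Rightarrow> nat list" where
  "lobster_beta b = [b + 1, 1, b + 1]"

end

(* In the column filling the middle row holds 1, ..., b, and the k-th cells (k = 0, 1, ...
   from the left) of the top and bottom rows hold b + k + 1 + min (k + 1) c2 and
   b + k + 1 + min k c1.  All rows increase to the right, so read right to left each row
   contributes (length choose 2) inversions.  Every top entry exceeds every middle entry
   (c1 * b inversions), no middle entry exceeds a bottom entry, and the k-th top entry
   exceeds exactly the first min (k + 1) c2 bottom entries.  Summing these counts gives the
   formula, which in fact holds for all b, c1, c2. *)

theory Submission
  imports Defs
begin

lemma inversions_Nil [simp]: "inversions [] = 0"
  by (simp add: inversions_def)

lemma inversions_Cons: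
  "inversions (x # xs) = length (filter (\<lambda>y. y < x) xs) + inversions xs"
proof -
  let ?inv = "\<lambda>w. {(p, q). p < q \<and> q < length w \<and> w ! p > w ! q}"
  let ?first = "{q. q < length xs \<and> xs ! q < x}"
  have split: "?inv (x # xs) = (\<lambda>q. (0, Suc q)) ` ?first \<union> map_prod Suc Suc ` ?inv xs"
  proof (intro set_eqI iffI)
    fix z assume "z \<in> ?inv (x # xs)"
    then obtain p q where z: "z = (p, Suc q)" "p < Suc q" "q < length xs"
        "(x # xs) ! p > xs ! q"
      by (auto simp: less_Suc_eq_0_disj)
    then show "z \<in> (\<lambda>q. (0, Suc q)) ` ?first \<union> map_prod Suc Suc ` ?inv xs"
      by (cases p) force+
  qed auto
  have "finite (?inv xs)"
    by (rule finite_subset[of _ "{..<length xs} \<times> {..<length xs}"]) auto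
  then have "card (?inv (x # xs)) = card ?first + card (?inv xs)"
    unfolding split by (subst card_Un_disjoint) (auto simp: card_image inj_on_def)
  then show ?thesis
    by (simp add: inversions_def length_filter_conv_card)
qed

definition cross_inversions :: "nat list \<Rightarrow> nat list \<Rightarrow> nat" where
  "cross_inversions xs ys = (\<Sum>x\<leftarrow>xs. length (filter (\<lambda>y. y < x) ys))"

lemma inversions_append:
  "inversions (xs @ ys) = inversions xs + inversions ys + cross_inversions xs ys"
  by (induction xs) (simp_all add: inversions_Cons cross_inversions_def)

lemma cross_inversions_append_right:
  "cross_inversions xs (ys @ zs) = cross_inversions xs ys + cross_inversions xs zs"
  by (induction xs) (simp_all add: cross_inversions_def)

lemma cross_inversions_eq_0:
  assumes "\<And>x y. x \<in> set xs \<Longrightarrow> y \<in> set ys \<Longrightarrow> x \<le> y"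
  shows "cross_inversions xs ys = 0"
  using assms by (force simp: cross_inversions_def filter_empty_conv)

lemma cross_inversions_all:
  assumes "\<And>x y. x \<in> set xs \<Longrightarrow> y \<in> set ys \<Longrightarrow> y < x"
  shows "cross_inversions xs ys = length xs * length ys"
proof -
  have "cross_inversions xs ys = (\<Sum>x\<leftarrow>xs. length ys)"
    unfolding cross_inversions_def using assms
    by (intro arg_cong[where f = sum_list] map_cong refl) simp
  then show ?thesis by (simp add: sum_list_triv)
qed

lemma inversions_strictly_decreasing:
  "sorted_wrt (>) xs \<Longrightarrow> inversions xs = length xs choose 2"
proof (induction xs)
  case (Cons x xs)
  then have "filter (\<lambda>y. y < x) xs = xs" by simp
  with Cons show ?case by (simp add: inversions_Cons numeral_2_eq_2)
qed simp

lemma inversions_strict_mono_rev_upt: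
  assumes "strict_mono f"
  shows "inversions (map f (rev [0..<n])) = n choose 2"
proof -
  have "sorted_wrt (>) (map f (rev [0..<n]))"
    unfolding sorted_wrt_map sorted_wrt_rev
    by (rule sorted_wrt_mono_rel[OF _ sorted_wrt_upt]) (use assms in \<open>simp add: strict_mono_def\<close>)
  then show ?thesis by (simp add: inversions_strictly_decreasing)
qed

lemma S_col_eq_sum_rows:
  "S_col \<alpha> \<beta> (i, j) =
     1 + (\<Sum>r<length \<alpha>. min (\<alpha> ! r) (if r < i then j else j - 1) - \<beta> ! r)"
proof -
  have "{(i', j') \<in> skew_cells \<alpha> \<beta>. j' < j \<or> (j' = j \<and> i' < i)}
      = (SIGMA r:{..<length \<alpha>}. {\<beta> ! r<..min (\<alpha> ! r) (if r < i then j else j - 1)})"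
    by (auto simp: skew_cells_def split: if_splits)
  then show ?thesis by (simp add: S_col_def)
qed

lemma reading_word_lobster:
  "reading_word (lobster_alpha c1 c2 b) (lobster_beta b)
       (S_col (lobster_alpha c1 c2 b) (lobster_beta b))
   = map (\<lambda>k. b + k + 1 + min (k + 1) c2) (rev [0..<c1])
     @ map Suc (rev [0..<b])
     @ map (\<lambda>k. b + k + 1 + min k c1) (rev [0..<c2])"
proof -
  let ?S = "S_col (lobster_alpha c1 c2 b) (lobster_beta b)"
  have S: "?S (i, j) = 1 + (min (b + 1 + c2) (if 0 < i then j else j - 1) - (b + 1))
                         + (min (b + 1) (if 1 < i then j else j - 1) - 1)
                         + (min (b + 1 + c1) (if 2 < i then j else j - 1) - (b + 1))" for i j
    by (simp add: S_col_eq_sum_rows lobster_alpha_def lobster_beta_def eval_nat_numeral)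
  have row: "rev [s..<s + n] = map (\<lambda>k. k + s) (rev [0..<n])" for s n :: nat
    by (simp add: rev_map map_add_upt[symmetric] add.commute del: upt_Suc)
  have rows: "rev [0..<length (lobster_alpha c1 c2 b)] = [2, 1, 0]"
    by (simp add: lobster_alpha_def eval_nat_numeral)
  have "reading_word (lobster_alpha c1 c2 b) (lobster_beta b) ?S
      = map (\<lambda>j. ?S (2, j)) (rev [b + 2..<b + 2 + c1])
        @ map (\<lambda>j. ?S (1, j)) (rev [2..<2 + b])
        @ map (\<lambda>j. ?S (0, j)) (rev [b + 2..<b + 2 + c2])"
    unfolding reading_word_def rows
    by (simp add: lobster_alpha_def lobster_beta_def numeral_2_eq_2 del: upt_Suc)
  also have "\<dots> = map (\<lambda>k. b + k + 1 + min (k + 1) c2) (rev [0..<c1])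
     @ map Suc (rev [0..<b])
     @ map (\<lambda>k. b + k + 1 + min k c1) (rev [0..<c2])"
    unfolding row map_map by (intro arg_cong2[where f = append] map_cong) (auto simp: S min_def)
  finally show ?thesis .
qed

lemma cross_inversions_lobster_top_bottom:
  "cross_inversions (map (\<lambda>k. b + k + 1 + min (k + 1) c2) (rev [0..<c1]))
                    (map (\<lambda>k. b + k + 1 + min k c1) (rev [0..<c2]))
   = (\<Sum>k<c1. min (k + 1) c2)"
proof -
  have count: "length (filter (\<lambda>y. y < b + k + 1 + min (k + 1) c2)
                  (map (\<lambda>k. b + k + 1 + min k c1) (rev [0..<c2]))) = min (k + 1) c2"
    if "k < c1" for k
  proof -
    have "{k'. b + k' + 1 + min k' c1 < b + k + 1 + min (k + 1) c2} \<inter> {0..<c2}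
        = {0..<min (k + 1) c2}"
      using that by (auto simp: min_def)
    then show ?thesis
      by (simp add: filter_map o_def rev_filter[symmetric] distinct_length_filter del: upt_Suc)
  qed
  have "cross_inversions (map (\<lambda>k. b + k + 1 + min (k + 1) c2) (rev [0..<c1]))
                    (map (\<lambda>k. b + k + 1 + min k c1) (rev [0..<c2]))
      = (\<Sum>k\<leftarrow>rev [0..<c1]. min (k + 1) c2)"
    unfolding cross_inversions_def map_map o_def
    by (intro arg_cong[where f = sum_list] map_cong refl) (use count in auto)
  then show ?thesis
    by (simp add: rev_map[symmetric] sum_set_upt_conv_sum_list_nat[symmetric] lessThan_atLeast0
        del: upt_Suc)
qed

lemma sum_min_add_choose_two:
  "(\<Sum>k<c. min (k + 1) d) + (c choose 2) + (d choose 2) = c * min c d + (max c d choose 2)"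
proof (induction c)
  case (Suc c)
  have "Suc n choose 2 = n + (n choose 2)" for n
    by (simp add: numeral_2_eq_2)
  with Suc show ?case
    by (cases "c < d") (simp_all add: min_def max_def algebra_simps)
qed simp

theorem lemma5p7:
  fixes b c1 c2 :: nat
  assumes "b > 0" and "c1 > 0" and "c2 > 0"
  shows "tab_inv (lobster_alpha c1 c2 b) (lobster_beta b)
           (S_col (lobster_alpha c1 c2 b) (lobster_beta b))
         = c1 * (b + min c1 c2) + (b choose 2) + (max c1 c2 choose 2)"
proof -
  define T where "T = map (\<lambda>k. b + k + 1 + min (k + 1) c2) (rev [0..<c1])"
  define M where "M = map Suc (rev [0..<b])"
  define B where "B = map (\<lambda>k. b + k + 1 + min k c1) (rev [0..<c2])"
  have inv_T: "inversions T = c1 choose 2"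
    unfolding T_def by (rule inversions_strict_mono_rev_upt) (auto intro: strict_monoI simp: min_def)
  have inv_M: "inversions M = b choose 2"
    unfolding M_def by (rule inversions_strict_mono_rev_upt) (simp add: strict_mono_Suc_iff)
  have inv_B: "inversions B = c2 choose 2"
    unfolding B_def by (rule inversions_strict_mono_rev_upt) (auto intro: strict_monoI simp: min_def)
  have cross_TM: "cross_inversions T M = c1 * b"
    unfolding T_def M_def by (subst cross_inversions_all) auto
  have cross_TB: "cross_inversions T B = (\<Sum>k<c1. min (k + 1) c2)"
    unfolding T_def B_def by (rule cross_inversions_lobster_top_bottom)
  have cross_MB: "cross_inversions M B = 0"
    unfolding M_def B_def by (rule cross_inversions_eq_0) auto
  have "tab_inv (lobster_alpha c1 c2 b) (lobster_beta b)
          (S_col (lobster_alpha c1 c2 b) (lobster_beta b)) = inversions (T @ M @ B)"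
    by (simp add: tab_inv_def reading_word_lobster T_def M_def B_def)
  also have "\<dots> = (c1 choose 2) + (b choose 2) + (c2 choose 2) + c1 * b + (\<Sum>k<c1. min (k + 1) c2)"
    by (simp add: inversions_append cross_inversions_append_right
        inv_T inv_M inv_B cross_TM cross_TB cross_MB)
  finally show ?thesis
    using sum_min_add_choose_two[where c = c1 and d = c2] unfolding distrib_left by linarith
qed

end
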